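(* Let $\rho>0$ and let $y\in\mathbb{R}^n$ satisfy $y_1\ge y_2\ge\cdots\ge y_n$. Then \[ S_\rho(y)=\Pi_{\mathcal D}(y-\rho w), \] where $w\in\mathbb{R}^n$ is given by $w_k=n-2k+1$, $k=1,\dots,n$.
   Context: For $\rho>0$ and $y\in\mathbb{R}^n$, $S_\rho(y):=\operatorname{argmin}_{x\in\mathbb{R}^n}\big\{\tfrac12\|x-y\|^2+\rho\sum_{1\le i<j\le n}|x_i-x_j|\big\}$ (unique minimizer). $\mathcal D:=\{x\in\mathbb{R}^n : x_1\ge x_2\ge\cdots\ge x_n\}$, and $\Pi_{\mathcal D}$ denotes the Euclidean (metric) projection onto $\mathcal D$. *)

theory Defs
  imports "HOL-Analysis.Analysis"
begin

text \<open>Vectors in R^n are modelled as real ^ 'n, with the coordinates of 'n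
  linearly ordered; coordinate i has position rank i = |{j. j <= i}| in 1..n.\<close>

definition rank :: "'n::{finite,linorder} \<Rightarrow> nat" where
  "rank i = card {j. j \<le> i}"

definition prox_obj :: "real \<Rightarrow> real ^ 'n::{finite,linorder} \<Rightarrow> real ^ 'n::{finite,linorder} \<Rightarrow> real" where
  "prox_obj \<rho> y x = (1/2) * (norm (x - y))\<^sup>2
      + \<rho> * (\<Sum>(i,j)\<in>{(i,j). i < j}. \<bar>x $ i - x $ j\<bar>)"

definition S :: "real \<Rightarrow> real ^ 'n::{finite,linorder} \<Rightarrow> real ^ 'n::{finite,linorder}" where
  "S \<rho> y = (THE x. \<forall>z. prox_obj \<rho> y x \<le> prox_obj \<rho> y z)"

definition D :: "(real ^ 'n::{finite,linorder}) set" where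
  "D = {x. \<forall>i j. i \<le> j \<longrightarrow> x $ j \<le> x $ i}"

definition proj :: "('a::real_normed_vector) set \<Rightarrow> 'a \<Rightarrow> 'a" where
  "proj C y = (THE x. x \<in> C \<and> (\<forall>z\<in>C. dist y x \<le> dist y z))"

end

theory Submission
  imports Defs
begin

text \<open>On the cone D the penalty is linear: for decreasing x,
  sum_{i<j} |x_i - x_j| = sum_k (n - 2k + 1) x_k = <w, x>.  Completing the square, the objective
  restricted to D is 1/2 ||x - (y - rho w)||^2 plus a constant, so its minimizer over D is the
  projection of y - rho w onto D.  Over all of R^n nothing better exists: sorting an arbitrary z
  into decreasing order permutes its entries, which keeps the penalty, and by the rearrangement
  inequality brings z no farther from the decreasing vector y.  Strict convexity of the objective
  makes the minimizer unique.\<close>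

lemma closed_D: "closed (D :: (real^'n::{finite,linorder}) set)"
proof -
  have "D = (\<Inter>i. \<Inter>j. {x::real^'n::{finite,linorder}. i \<le> j \<longrightarrow> x$j \<le> x$i})"
    unfolding D_def by auto
  moreover have "closed {x::real^'n::{finite,linorder}. i \<le> j \<longrightarrow> x$j \<le> x$i}" for i j
    by (cases "i \<le> j") (simp_all add: closed_Collect_le continuous_on_component continuous_intros)
  ultimately show ?thesis by (metis (no_types, lifting) closed_INT UNIV_I)
qed

lemma convex_D: "convex (D :: (real^'n::{finite,linorder}) set)"
  unfolding D_def convex_def by (auto intro!: add_mono mult_left_mono)

lemma zero_in_D: "0 \<in> (D :: (real^'n::{finite,linorder}) set)"
  unfolding D_def by simp

lemma proj_D_eq_closest_point: "proj (D :: (real^'n::{finite,linorder}) set) q = closest_point D q"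
  unfolding proj_def
proof (rule the_equality)
  show "closest_point D q \<in> D \<and> (\<forall>z\<in>D. dist q (closest_point D q) \<le> dist q z)"
    using closest_point_exists[OF closed_D] zero_in_D by blast
  show "x = closest_point D q" if "x \<in> D \<and> (\<forall>z\<in>D. dist q x \<le> dist q z)" for x
    using closest_point_unique[OF convex_D closed_D] that by blast
qed

lemma card_greater_add_rank: "card {j. i < j} + rank (i::'n::{finite,linorder}) = CARD('n)"
proof -
  have "card ({j. i < j} \<union> {j. j \<le> i}) = card {j. i < j} + card {j. j \<le> i}"
    by (rule card_Un_disjoint) auto
  moreover have "{j. i < j} \<union> {j. j \<le> i} = UNIV" by auto
  ultimately show ?thesis unfolding rank_def by simp
qed

lemma rank_eq_card_less_plus_one: "rank (j::'n::{finite,linorder}) = card {i. i < j} + 1"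
proof -
  have "{i. i \<le> j} = insert j {i. i < j}" by auto
  then show ?thesis unfolding rank_def by simp
qed

lemma rank_less: "(i::'n::{finite,linorder}) < j \<Longrightarrow> rank i < rank j"
  unfolding rank_def by (rule psubset_card_mono) (auto intro: order.trans simp: less_le_not_le)

definition descending_weights :: "real^'n::{finite,linorder}" where
  "descending_weights = (\<chi> k. real CARD('n) - 2 * real (rank k) + 1)"

definition pairwise_abs_diff_sum :: "real^'n::{finite,linorder} \<Rightarrow> real" where
  "pairwise_abs_diff_sum x = (\<Sum>(i,j)\<in>{(i,j). i < j}. \<bar>x $ i - x $ j\<bar>)"

lemma prox_obj_eq: "prox_obj \<rho> y x = (1/2) * (norm (x - y))\<^sup>2 + \<rho> * pairwise_abs_diff_sum x"
  unfolding prox_obj_def pairwise_abs_diff_sum_def ..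

lemma sum_ordered_pairs:
  "(\<Sum>(i,j)\<in>{(i::'n::{finite,linorder}, j). i < j}. g i j) =
     (\<Sum>i\<in>UNIV. \<Sum>j\<in>UNIV. if i < j then g i j else (0::real))"
proof -
  have "(\<Sum>(i,j)\<in>{(i::'n, j). i < j}. g i j) = (\<Sum>p\<in>{p\<in>UNIV. fst p < snd p}. g (fst p) (snd p))"
    by (simp add: case_prod_unfold)
  also have "\<dots> = (\<Sum>(i,j)\<in>UNIV. if i < j then g i j else 0)"
    by (subst sum.inter_filter) (simp_all add: case_prod_unfold)
  finally show ?thesis by (simp add: sum.cartesian_product)
qed

lemma pairwise_abs_diff_sum_eq_inner:
  fixes x :: "real^'n::{finite,linorder}"
  assumes "x \<in> D"
  shows "pairwise_abs_diff_sum x = descending_weights \<bullet> x"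
proof -
  have card_if: "(\<Sum>j\<in>(UNIV::'n set). if P j then c else 0) = c * real (card {j. P j})"
    for P and c :: real
    by (simp add: sum.If_cases)
  have "pairwise_abs_diff_sum x = (\<Sum>(i,j)\<in>{(i::'n, j). i < j}. x$i - x$j)"
    unfolding pairwise_abs_diff_sum_def using assms unfolding D_def
    by (intro sum.cong) auto
  also have "\<dots> = (\<Sum>i\<in>UNIV. \<Sum>j\<in>UNIV. if i < j then x$i - x$j else 0)"
    by (rule sum_ordered_pairs)
  also have "\<dots> = (\<Sum>i\<in>UNIV. \<Sum>j\<in>UNIV. if i < j then x$i else 0)
                 - (\<Sum>i\<in>UNIV. \<Sum>j\<in>UNIV. if i < j then x$j else 0)"
    by (simp add: sum_subtractf[symmetric] if_distrib cong: if_cong)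
  also have "(\<Sum>i\<in>UNIV. \<Sum>j\<in>UNIV. if i < j then x$j else 0)
           = (\<Sum>j\<in>UNIV. \<Sum>i\<in>UNIV. if i < j then x$j else 0)"
    by (rule sum.swap)
  also have "(\<Sum>i\<in>UNIV. \<Sum>j\<in>UNIV. if i < j then x$i else 0)
               - (\<Sum>j\<in>UNIV. \<Sum>i\<in>UNIV. if i < j then x$j else 0)
           = (\<Sum>k\<in>UNIV. x$k * real (card {j. k < j})) - (\<Sum>k\<in>UNIV. x$k * real (card {i. i < k}))"
    by (simp add: card_if)
  also have "\<dots> = (\<Sum>k\<in>UNIV. x$k * (real (card {j. k < j}) - real (card {i. i < k})))"
    by (simp add: sum_subtractf right_diff_distrib)
  also have "\<dots> = descending_weights \<bullet> x"
  proof -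
    have "real (card {j. k < j}) - real (card {i. i < k}) = real CARD('n) - 2 * real (rank k) + 1"
      for k :: 'n
      using card_greater_add_rank[of k] rank_eq_card_less_plus_one[of k] by linarith
    then show ?thesis unfolding descending_weights_def inner_vec_def by (simp add: mult.commute)
  qed
  finally show ?thesis .
qed

lemma double_pairwise_abs_diff_sum:
  "2 * pairwise_abs_diff_sum x = (\<Sum>i\<in>UNIV. \<Sum>j\<in>UNIV. \<bar>x$i - x$j\<bar>)"
proof -
  have "(\<Sum>i\<in>UNIV. \<Sum>j\<in>UNIV. \<bar>x$i - x$j\<bar>) =
     (\<Sum>i\<in>UNIV. \<Sum>j\<in>UNIV. if i < j then \<bar>x$i - x$j\<bar> else 0)
     + (\<Sum>i\<in>UNIV. \<Sum>j\<in>UNIV. if j < i then \<bar>x$i - x$j\<bar> else 0)"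
    unfolding sum.distrib[symmetric] by (intro sum.cong refl) auto
  also have "(\<Sum>i\<in>UNIV. \<Sum>j\<in>UNIV. if j < i then \<bar>x$i - x$j\<bar> else 0)
           = (\<Sum>j\<in>UNIV. \<Sum>i\<in>UNIV. if j < i then \<bar>x$i - x$j\<bar> else 0)"
    by (rule sum.swap)
  also have "\<dots> = (\<Sum>i\<in>UNIV. \<Sum>j\<in>UNIV. if i < j then \<bar>x$i - x$j\<bar> else 0)"
    by (intro sum.cong refl) (simp add: abs_minus_commute)
  finally show ?thesis unfolding pairwise_abs_diff_sum_def sum_ordered_pairs by simp
qed

lemma pairwise_abs_diff_sum_permute:
  assumes "bij \<sigma>"
  shows "pairwise_abs_diff_sum (\<chi> k. z $ \<sigma> k) = pairwise_abs_diff_sum z"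
proof -
  have \<sigma>: "bij_betw \<sigma> UNIV UNIV"
    using assms by (simp add: bij_def bij_betw_def)
  have "(\<Sum>i\<in>UNIV. \<Sum>j\<in>UNIV. \<bar>z $ \<sigma> i - z $ \<sigma> j\<bar>)
      = (\<Sum>i\<in>UNIV. \<Sum>j\<in>UNIV. \<bar>z $ \<sigma> i - z $ j\<bar>)"
    by (intro sum.cong refl sum.reindex_bij_betw[OF \<sigma>])
  also have "\<dots> = (\<Sum>i\<in>UNIV. \<Sum>j\<in>UNIV. \<bar>z $ i - z $ j\<bar>)"
    by (rule sum.reindex_bij_betw[OF \<sigma>, where g = "\<lambda>i. \<Sum>j\<in>UNIV. \<bar>z $ i - z $ j\<bar>"])
  finally show ?thesis
    using double_pairwise_abs_diff_sum[of z] double_pairwise_abs_diff_sum[of "\<chi> k. z $ \<sigma> k"]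
    by simp
qed

lemma pairwise_abs_diff_sum_midpoint:
  "pairwise_abs_diff_sum (midpoint x p) \<le> (pairwise_abs_diff_sum x + pairwise_abs_diff_sum p) / 2"
proof -
  have "\<bar>midpoint x p $ i - midpoint x p $ j\<bar> \<le> \<bar>x$i - x$j\<bar> / 2 + \<bar>p$i - p$j\<bar> / 2" for i j
    using abs_triangle_ineq[of "x$i - x$j" "p$i - p$j"]
    by (simp add: midpoint_def algebra_simps abs_divide[symmetric] add_divide_distrib[symmetric]
        diff_divide_distrib[symmetric])
  then have "pairwise_abs_diff_sum (midpoint x p)
      \<le> (\<Sum>(i,j)\<in>{(i,j). i < j}. \<bar>x$i - x$j\<bar> / 2 + \<bar>p$i - p$j\<bar> / 2)"
    unfolding pairwise_abs_diff_sum_def by (intro sum_mono) auto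
  also have "\<dots> = (pairwise_abs_diff_sum x + pairwise_abs_diff_sum p) / 2"
    unfolding pairwise_abs_diff_sum_def
    by (simp add: sum.distrib sum_divide_distrib add_divide_distrib case_prod_beta)
  finally show ?thesis .
qed

lemma transpose_entries_eq_add_axis:
  "(\<chi> k. x $ Transposition.transpose i j k) = x + (x$j - x$i) *\<^sub>R (axis i 1 - axis j (1::real))"
  by (cases "i = j") (auto simp: vec_eq_iff axis_def Transposition.transpose_def)

lemma inner_transpose_entries:
  "w \<bullet> (\<chi> k. x $ Transposition.transpose i j k) = w \<bullet> x + (x$j - x$i) * (w$i - w$j)"
  for w x :: "real^'n::finite"
  unfolding transpose_entries_eq_add_axis
  by (simp add: inner_add_right inner_diff_right inner_commute[of w] inner_axis)

lemma power2_norm_add_scaleR: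
  "(norm (a + d *\<^sub>R e))\<^sup>2 = (norm a)\<^sup>2 + 2 * d * (a \<bullet> e) + d\<^sup>2 * (e \<bullet> e)"
  for a e :: "'a::real_inner"
  unfolding power2_norm_eq_inner
  by (simp add: inner_add_left inner_add_right inner_commute[of e a] power2_eq_square algebra_simps)

lemma norm_transpose_entries_diff_le:
  fixes x y :: "real^'n::finite"
  assumes "0 \<le> (x$j - x$i) * (y$i - y$j)"
  shows "norm ((\<chi> k. x $ Transposition.transpose i j k) - y) \<le> norm (x - y)"
proof (cases "i = j")
  case False
  define e :: "real^'n" where "e = axis i 1 - axis j 1"
  have "(\<chi> k. x $ Transposition.transpose i j k) - y = (x - y) + (x$j - x$i) *\<^sub>R e"
    unfolding transpose_entries_eq_add_axis e_def by simp
  moreover have "e \<bullet> e = 2"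
    using False by (simp add: e_def inner_diff_left inner_diff_right inner_axis_axis)
  moreover have "(x - y) \<bullet> e = (x$i - y$i) - (x$j - y$j)"
    by (simp add: e_def inner_diff_right inner_axis)
  ultimately have "(norm ((\<chi> k. x $ Transposition.transpose i j k) - y))\<^sup>2
      = (norm (x - y))\<^sup>2 + 2 * (x$j - x$i) * ((x$i - y$i) - (x$j - y$j)) + (x$j - x$i)\<^sup>2 * 2"
    by (simp only: power2_norm_add_scaleR)
  also have "\<dots> = (norm (x - y))\<^sup>2 - 2 * ((x$j - x$i) * (y$i - y$j))"
    by (simp add: power2_eq_square algebra_simps)
  finally have "(norm ((\<chi> k. x $ Transposition.transpose i j k) - y))\<^sup>2 \<le> (norm (x - y))\<^sup>2"
    using assms by linarith
  then show ?thesis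
    by (rule power2_le_imp_le) simp
qed simp

lemma exists_sorting_permutation:
  fixes y z :: "real^'n::{finite,linorder}"
  assumes "y \<in> D"
  obtains \<sigma> where "bij \<sigma>" "(\<chi> k. z $ \<sigma> k) \<in> D" "norm ((\<chi> k. z $ \<sigma> k) - y) \<le> norm (z - y)"
proof -
  txt \<open>Among the permutations that do not move z away from y, take one maximizing <w, z o sigma>.
    Swapping an out-of-order pair of entries stays in that set and strictly increases the weighted
    sum, so the maximizer is sorted.\<close>
  define P where "P = {\<sigma>. bij \<sigma> \<and> norm ((\<chi> k. z $ \<sigma> k) - y) \<le> norm (z - y)}"
  define h where "h \<sigma> = descending_weights \<bullet> (\<chi> k. z $ \<sigma> k)" for \<sigma> :: "'n \<Rightarrow> 'n"
  have "finite (h ` P)" "id \<in> P"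
    unfolding P_def by simp_all
  then obtain \<sigma> where \<sigma>: "\<sigma> \<in> P" "h \<sigma> = Max (h ` P)"
    by (metis (no_types, lifting) Max_in empty_iff image_iff)
  have "(\<chi> k. z $ \<sigma> k) \<in> D"
  proof (rule ccontr)
    assume "(\<chi> k. z $ \<sigma> k) \<notin> D"
    then obtain i j where "i < j" "z $ \<sigma> i < z $ \<sigma> j"
      unfolding D_def by (auto simp: not_le order.order_iff_strict)
    define \<tau> where "\<tau> = \<sigma> \<circ> Transposition.transpose i j"
    have \<tau>: "(\<chi> k. z $ \<tau> k) = (\<chi> k. (\<chi> k. z $ \<sigma> k) $ Transposition.transpose i j k)"
      by (simp add: \<tau>_def)
    have "y $ j \<le> y $ i"
      using \<open>y \<in> D\<close> \<open>i < j\<close> unfolding D_def by simp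
    then have "norm ((\<chi> k. z $ \<tau> k) - y) \<le> norm ((\<chi> k. z $ \<sigma> k) - y)"
      unfolding \<tau> using \<open>z $ \<sigma> i < z $ \<sigma> j\<close>
      by (intro norm_transpose_entries_diff_le) simp
    moreover have "bij \<tau>"
      using \<sigma>(1) unfolding P_def \<tau>_def by (auto intro: bij_comp)
    ultimately have "\<tau> \<in> P"
      using \<sigma>(1) unfolding P_def by auto
    moreover have "h \<tau> > h \<sigma>"
    proof -
      have "descending_weights $ j < descending_weights $ i"
        using rank_less[OF \<open>i < j\<close>] by (simp add: descending_weights_def)
      then show ?thesis
        unfolding h_def \<tau> inner_transpose_entries using \<open>z $ \<sigma> i < z $ \<sigma> j\<close> by simp
    qed
    ultimately show False
      using \<sigma>(2) \<open>finite (h ` P)\<close> by (metis Max_ge image_eqI not_le)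
  qed
  with \<sigma>(1) that show ?thesis
    unfolding P_def by blast
qed

lemma prox_obj_exists_sorted_le:
  fixes y z :: "real^'n::{finite,linorder}"
  assumes "y \<in> D" "0 \<le> \<rho>"
  obtains x where "x \<in> D" "prox_obj \<rho> y x \<le> prox_obj \<rho> y z"
proof -
  obtain \<sigma> where \<sigma>: "bij \<sigma>" "(\<chi> k. z $ \<sigma> k) \<in> D"
    "norm ((\<chi> k. z $ \<sigma> k) - y) \<le> norm (z - y)"
    using exists_sorting_permutation[OF assms(1)] .
  have "prox_obj \<rho> y (\<chi> k. z $ \<sigma> k) \<le> prox_obj \<rho> y z"
    unfolding prox_obj_eq pairwise_abs_diff_sum_permute[OF \<sigma>(1)]
    using \<sigma>(3) by (simp add: power_mono)
  with \<sigma>(2) that show ?thesis by blast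
qed

lemma half_power2_norm_diff_add_inner:
  "(1/2) * (norm (x - y))\<^sup>2 + \<rho> * (w \<bullet> x)
     = (1/2) * (norm (x - (y - \<rho> *\<^sub>R w)))\<^sup>2 + (\<rho> * (w \<bullet> y) - (1/2) * \<rho>\<^sup>2 * (norm w)\<^sup>2)"
  for x y w :: "'a::real_inner"
  unfolding power2_norm_eq_inner
  by (simp add: inner_add_left inner_add_right inner_diff_left inner_diff_right inner_commute
      algebra_simps power2_eq_square)

lemma prox_obj_le_on_D:
  fixes x x' y :: "real^'n::{finite,linorder}"
  assumes "x \<in> D" "x' \<in> D"
    and "norm (x - (y - \<rho> *\<^sub>R descending_weights)) \<le> norm (x' - (y - \<rho> *\<^sub>R descending_weights))"
  shows "prox_obj \<rho> y x \<le> prox_obj \<rho> y x'"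
  using assms(3)
  unfolding prox_obj_eq pairwise_abs_diff_sum_eq_inner[OF assms(1)] pairwise_abs_diff_sum_eq_inner[OF assms(2)]
    half_power2_norm_diff_add_inner
  by (simp add: power_mono)

lemma power2_norm_midpoint_diff:
  "(norm (midpoint x p - y))\<^sup>2 = (norm (x - y))\<^sup>2 / 2 + (norm (p - y))\<^sup>2 / 2 - (norm (x - p))\<^sup>2 / 4"
  for x p y :: "'a::real_inner"
proof -
  have "midpoint x p - y = (1/2) *\<^sub>R ((x - y) + (p - y))"
    by (simp add: midpoint_def algebra_simps) (metis scaleR_half_double scaleR_add_right)
  moreover have "x - p = (x - y) - (p - y)"
    by simp
  ultimately show ?thesis
    unfolding power2_norm_eq_inner
    by (simp only:) (simp add: inner_add_left inner_add_right inner_diff_left inner_diff_right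
        inner_commute algebra_simps field_simps)
qed

lemma prox_minimizer_unique:
  fixes f :: "'a::real_inner \<Rightarrow> real"
  assumes midpoint_convex: "\<And>u v. f (midpoint u v) \<le> (f u + f v) / 2"
    and x_min: "\<And>z. (1/2) * (norm (x - y))\<^sup>2 + f x \<le> (1/2) * (norm (z - y))\<^sup>2 + f z"
    and p_min: "\<And>z. (1/2) * (norm (p - y))\<^sup>2 + f p \<le> (1/2) * (norm (z - y))\<^sup>2 + f z"
  shows "x = p"
proof -
  let ?F = "\<lambda>z. (1/2) * (norm (z - y))\<^sup>2 + f z"
  have "?F (midpoint x p) \<le> (?F x + ?F p) / 2 - (norm (x - p))\<^sup>2 / 8"
    using midpoint_convex[of x p] unfolding power2_norm_midpoint_diff by (simp add: field_simps)
  moreover have "?F x \<le> ?F (midpoint x p)" "?F x = ?F p"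
    using x_min p_min by (auto intro: order.antisym)
  ultimately have "(norm (x - p))\<^sup>2 \<le> 0"
    by argo
  then show ?thesis by simp
qed

lemma S_eq_minimizer:
  fixes y p :: "real^'n::{finite,linorder}"
  assumes "0 \<le> \<rho>" "\<And>z. prox_obj \<rho> y p \<le> prox_obj \<rho> y z"
  shows "S \<rho> y = p"
  unfolding S_def
proof (rule the_equality)
  show "\<forall>z. prox_obj \<rho> y p \<le> prox_obj \<rho> y z" using assms(2) ..
  show "x = p" if "\<forall>z. prox_obj \<rho> y x \<le> prox_obj \<rho> y z" for x
  proof (rule prox_minimizer_unique[where f = "\<lambda>x. \<rho> * pairwise_abs_diff_sum x" and y = y])
    show "\<rho> * pairwise_abs_diff_sum (midpoint u v)
        \<le> (\<rho> * pairwise_abs_diff_sum u + \<rho> * pairwise_abs_diff_sum v) / 2" for u v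
      using mult_left_mono[OF pairwise_abs_diff_sum_midpoint[of u v] assms(1)]
      by (simp add: distrib_left)
  qed (use that assms(2) in \<open>simp_all add: prox_obj_eq\<close>)
qed

theorem proposition2p2:
  fixes \<rho> :: real and y :: "real ^ 'n::{finite,linorder}"
  assumes "\<rho> > 0"
    and "y \<in> D"
  shows "S \<rho> y = proj D (y - \<rho> *\<^sub>R (\<chi> k. real CARD('n) - 2 * real (rank k) + 1))"
proof -
  define q where "q = y - \<rho> *\<^sub>R descending_weights"
  define p where "p = closest_point D q"
  have "p \<in> D"
    unfolding p_def using closest_point_exists[OF closed_D] zero_in_D by blast
  have p_min_on_D: "prox_obj \<rho> y p \<le> prox_obj \<rho> y x" if "x \<in> D" for x
    using closest_point_le[OF closed_D that, of q] \<open>p \<in> D\<close> that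
    by (intro prox_obj_le_on_D) (simp_all add: p_def q_def dist_norm norm_minus_commute)
  have "prox_obj \<rho> y p \<le> prox_obj \<rho> y z" for z
    using prox_obj_exists_sorted_le[OF assms(2) less_imp_le[OF assms(1)]] p_min_on_D order.trans
    by metis
  then have "S \<rho> y = p"
    using assms(1) by (intro S_eq_minimizer) auto
  then show ?thesis
    unfolding proj_D_eq_closest_point p_def q_def descending_weights_def .
qed

end
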